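(* Let $A\ge0$ and let $c:(0,1]\times S^1\to\mathbb R^2$ be smooth with each $c(t,\cdot)$ an immersion, and let $\alpha(t,\theta)$ be a continuous lift of $\arg c_\theta(t,\theta)$. Assume there are constants $C_1,C_2,C_3,C_4$ such that for all $t\in(0,1]$ and $\theta\in S^1$: (1) $\ell(c(t,\cdot))\le C_1$; (2) $|c_t(t,\theta)|\le C_2$; (3) $\int_{S^1}|\alpha_\theta(t,\theta)|\,d\theta\le C_3$; (4) $|\kappa_{c(t)}(\theta)|\le C_4/t$. Then $$\int_0^1\Big(\int_{S^1}(1+A\kappa_{c(t)}^2)\langle c_t,n_{c(t)}\rangle^2|c_\theta|\,d\theta\Big)^{1/2}dt\le C_2\big(\sqrt{C_1}+2\sqrt{AC_3C_4}\big).$$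
   Context: $S^1=\mathbb R/2\pi\mathbb Z$, $\mathbb R^2\cong\mathbb C$. $\ell(c)=\int_{S^1}|c_\theta|d\theta$, $n_c=ic_\theta/|c_\theta|$, $\kappa_c=\det(c_\theta,c_{\theta\theta})/|c_\theta|^3$. *)

theory Defs
  imports "HOL-Analysis.Analysis"
begin

text \<open>A family of closed curves is modelled as c :: real => real => complex,
  c t theta, defined for t in (0,1] and theta in R, 2 pi-periodic in theta.\<close>

definition tdom :: "real set" where "tdom = {0<..1}"

definition Dt :: "(real \<Rightarrow> real \<Rightarrow> complex) \<Rightarrow> real \<Rightarrow> real \<Rightarrow> complex" where
  "Dt f t \<theta> = vector_derivative (\<lambda>s. f s \<theta>) (at t within tdom)"

definition Dth :: "(real \<Rightarrow> real \<Rightarrow> complex) \<Rightarrow> real \<Rightarrow> real \<Rightarrow> complex" where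
  "Dth f t \<theta> = vector_derivative (\<lambda>\<phi>. f t \<phi>) (at \<theta>)"

inductive_set pderivs :: "(real \<Rightarrow> real \<Rightarrow> complex) \<Rightarrow> (real \<Rightarrow> real \<Rightarrow> complex) set"
  for f where
  base: "f \<in> pderivs f"
| dt: "g \<in> pderivs f \<Longrightarrow> Dt g \<in> pderivs f"
| dth: "g \<in> pderivs f \<Longrightarrow> Dth g \<in> pderivs f"

definition smooth_strip :: "(real \<Rightarrow> real \<Rightarrow> complex) \<Rightarrow> bool" where
  "smooth_strip f \<longleftrightarrow> (\<forall>g \<in> pderivs f.
      continuous_on (tdom \<times> UNIV) (\<lambda>(t,\<theta>). g t \<theta>) \<and>
      (\<forall>t\<in>tdom. \<forall>\<theta>.
         ((\<lambda>s. g s \<theta>) has_vector_derivative Dt g t \<theta>) (at t within tdom) \<and>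
         ((\<lambda>\<phi>. g t \<phi>) has_vector_derivative Dth g t \<theta>) (at \<theta>)))"

definition curve_length :: "(real \<Rightarrow> real \<Rightarrow> complex) \<Rightarrow> real \<Rightarrow> real" where
  "curve_length c t = integral {0..2*pi} (\<lambda>\<theta>. norm (Dth c t \<theta>))"

definition unit_normal :: "(real \<Rightarrow> real \<Rightarrow> complex) \<Rightarrow> real \<Rightarrow> real \<Rightarrow> complex" where
  "unit_normal c t \<theta> = \<i> * Dth c t \<theta> / complex_of_real (norm (Dth c t \<theta>))"

definition curvature :: "(real \<Rightarrow> real \<Rightarrow> complex) \<Rightarrow> real \<Rightarrow> real \<Rightarrow> real" where
  "curvature c t \<theta> =
     (Re (Dth c t \<theta>) * Im (Dth (Dth c) t \<theta>) - Im (Dth c t \<theta>) * Re (Dth (Dth c) t \<theta>))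
       / norm (Dth c t \<theta>) ^ 3"

end

theory Submission
  imports Defs
begin

text \<open>The lift satisfies \<open>\<alpha>\<^sub>\<theta> = \<kappa> |c\<^sub>\<theta>|\<close>, so hypothesis (3) bounds the total absolute
  curvature \<open>\<integral> |\<kappa>| |c\<^sub>\<theta>| d\<theta>\<close> by \<open>C3\<close>. Pointwise \<open>\<langle>c\<^sub>t, n\<rangle>\<^sup>2 \<le> C2\<^sup>2\<close> and
  \<open>\<kappa>\<^sup>2 \<le> (C4 / t) |\<kappa>|\<close>, so the inner integral at time \<open>t\<close> is at most
  \<open>C2\<^sup>2 C1 + A C3 C4 C2\<^sup>2 / t\<close>. Its square root is dominated by
  \<open>C2 sqrt C1 + C2 sqrt (A C3 C4) t powr (-1/2)\<close>, which is integrable on \<open>[0, 1]\<close>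
  with integral \<open>C2 (sqrt C1 + 2 sqrt (A C3 C4))\<close>.\<close>

lemma integral_nonneg_unconditional:
  fixes f :: "'a::euclidean_space \<Rightarrow> real"
  assumes "\<And>x. x \<in> S \<Longrightarrow> 0 \<le> f x"
  shows "0 \<le> integral S f"
  using assms by (cases "f integrable_on S") (auto intro: integral_nonneg simp: not_integrable_integral)

lemma continuous_on_slice:
  assumes "continuous_on (S \<times> T) (\<lambda>(x, y). f x y)" "x \<in> S" "U \<subseteq> T"
  shows "continuous_on U (f x)"
proof -
  have "continuous_on U (\<lambda>y. (x, y))" by (intro continuous_intros)
  moreover have "(\<lambda>y. (x, y)) ` U \<subseteq> S \<times> T" using assms(2,3) by auto
  ultimately show ?thesis
    using continuous_on_compose2[OF assms(1)] by fastforce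
qed

text \<open>Near \<open>\<theta>\<close> the lift agrees with \<open>a \<theta> + Im (Ln (u \<phi> / u \<theta>))\<close>: continuity keeps
  the difference of arguments below \<open>pi\<close>, where \<open>Ln\<close> inverts \<open>exp\<close>.\<close>
lemma continuous_lift_has_real_derivative:
  fixes u :: "real \<Rightarrow> complex" and a :: "real \<Rightarrow> real"
  assumes du: "(u has_vector_derivative u') (at \<theta>)" and nz: "u \<theta> \<noteq> 0"
    and ca: "isCont a \<theta>"
    and polar: "\<And>\<phi>. u \<phi> = of_real (norm (u \<phi>)) * cis (a \<phi>)"
  shows "(a has_real_derivative Im (u' / u \<theta>)) (at \<theta>)"
proof -
  define w where "w \<phi> = u \<phi> / u \<theta>" for \<phi>
  have "(w has_vector_derivative (u' / u \<theta>)) (at \<theta>)"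
    unfolding w_def by (intro has_vector_derivative_divide du)
  moreover have "(Ln has_field_derivative 1) (at (w \<theta>))"
    using has_field_derivative_Ln[of 1] nz by (simp add: w_def)
  ultimately have "((Ln \<circ> w) has_vector_derivative (u' / u \<theta> * 1)) (at \<theta>)"
    by (rule field_vector_diff_chain_at)
  then have "((\<lambda>\<phi>. Ln (w \<phi>)) has_derivative (\<lambda>h. h *\<^sub>R (u' / u \<theta>))) (at \<theta>)"
    by (simp add: has_vector_derivative_def o_def)
  then have "((\<lambda>\<phi>. Im (Ln (w \<phi>))) has_derivative (\<lambda>h. Im (h *\<^sub>R (u' / u \<theta>)))) (at \<theta>)"
    by (rule has_derivative_Im)
  moreover have "(\<lambda>h. Im (h *\<^sub>R (u' / u \<theta>))) = (*) (Im (u' / u \<theta>))"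
    by auto
  ultimately have "((\<lambda>\<phi>. Im (Ln (w \<phi>))) has_real_derivative Im (u' / u \<theta>)) (at \<theta>)"
    by (simp add: has_field_derivative_def)
  then have D: "((\<lambda>\<phi>. a \<theta> + Im (Ln (w \<phi>))) has_real_derivative Im (u' / u \<theta>)) (at \<theta>)"
    using DERIV_add[OF DERIV_const] by fastforce
  obtain d1 where d1: "d1 > 0" "\<And>\<phi>. dist \<phi> \<theta> < d1 \<Longrightarrow> dist (a \<phi>) (a \<theta>) < pi"
    using ca unfolding continuous_at_eps_delta by (meson pi_gt_zero)
  obtain d2 where d2: "d2 > 0" "\<And>\<phi>. dist \<phi> \<theta> < d2 \<Longrightarrow> dist (u \<phi>) (u \<theta>) < norm (u \<theta>)"
    using has_vector_derivative_continuous[OF du] nz unfolding continuous_at_eps_delta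
    by (meson zero_less_norm_iff)
  have near: "a \<theta> + Im (Ln (w \<phi>)) = a \<phi>" if "dist \<phi> \<theta> < min d1 d2" for \<phi>
  proof -
    have "u \<phi> \<noteq> 0" using d2(2)[of \<phi>] that by (auto simp: dist_norm)
    define r where "r = norm (u \<phi>) / norm (u \<theta>)"
    have r: "r > 0" using nz \<open>u \<phi> \<noteq> 0\<close> by (simp add: r_def)
    have "w \<phi> = of_real r * cis (a \<phi> - a \<theta>)"
      unfolding w_def r_def
      by (subst (1 2) polar) (use nz in \<open>simp add: cis_divide[symmetric] field_simps\<close>)
    also have "\<dots> = exp (Complex (ln r) (a \<phi> - a \<theta>))"
      using r by (simp add: exp_eq_polar)
    finally have "Ln (w \<phi>) = Complex (ln r) (a \<phi> - a \<theta>)"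
      using d1(2)[of \<phi>] that by (auto simp: dist_real_def)
    then show ?thesis by simp
  qed
  show ?thesis
    by (rule has_field_derivative_transform_within[OF D _ UNIV_I, of "min d1 d2"])
      (use d1(1) d2(1) near in auto)
qed

lemma normal_energy_density_le:
  fixes A k K v V N :: real
  assumes "0 \<le> A" "\<bar>k\<bar> \<le> K" "\<bar>v\<bar> \<le> V" "0 \<le> N"
  shows "(1 + A * k\<^sup>2) * v\<^sup>2 * N \<le> V\<^sup>2 * N + A * K * V\<^sup>2 * (\<bar>k\<bar> * N)"
proof -
  have "k\<^sup>2 \<le> K * \<bar>k\<bar>"
    using mult_right_mono[OF assms(2) abs_ge_zero[of k]] by (simp add: power2_eq_square)
  then have "1 + A * k\<^sup>2 \<le> 1 + A * K * \<bar>k\<bar>"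
    using assms(1) by (simp add: mult.assoc mult_left_mono)
  moreover have "v\<^sup>2 \<le> V\<^sup>2"
    using assms(3) by (metis abs_ge_zero power2_abs power_mono)
  ultimately have "(1 + A * k\<^sup>2) * v\<^sup>2 \<le> (1 + A * K * \<bar>k\<bar>) * V\<^sup>2"
    using assms by (intro mult_mono) auto
  from mult_right_mono[OF this assms(4)] show ?thesis
    by (simp add: algebra_simps)
qed

lemma sqrt_add_divide_le:
  fixes a b t :: real
  assumes "0 \<le> a" "0 \<le> b" "0 < t"
  shows "sqrt (a + b / t) \<le> sqrt a + sqrt b * t powr (-1/2)"
proof -
  have "sqrt (a + b / t) \<le> sqrt a + sqrt (b / t)"
    using assms by (intro sqrt_add_le_add_sqrt) auto
  also have "sqrt (b / t) = sqrt b * t powr (-1/2)"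
    using assms by (simp add: real_sqrt_divide powr_minus_divide powr_half_sqrt)
  finally show ?thesis .
qed

lemma integral_sqrt_le_of_le_add_inverse:
  fixes f :: "real \<Rightarrow> real"
  assumes cont: "continuous_on {0<..1} f"
    and nonneg: "\<And>t. t \<in> {0<..1} \<Longrightarrow> 0 \<le> f t"
    and le: "\<And>t. t \<in> {0<..1} \<Longrightarrow> f t \<le> a + b / t"
    and "0 \<le> a" "0 \<le> b"
  shows "(\<lambda>t. sqrt (f t)) integrable_on {0..1}
    \<and> integral {0..1} (\<lambda>t. sqrt (f t)) \<le> sqrt a + 2 * sqrt b"
proof -
  define g where "g t = sqrt a + sqrt b * t powr (-1/2)" for t :: real
  have "((\<lambda>t. t powr (-1/2)) has_integral 2) {0..1::real}"
    using has_integral_powr_from_0[of "-1/2" 1] by simp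
  then have "(g has_integral (sqrt a + sqrt b * 2)) {0..1}"
    unfolding g_def using has_integral_const_real[of "sqrt a" 0 1]
    by (intro has_integral_add has_integral_mult_right) auto
  then have g: "(g has_integral (sqrt a + 2 * sqrt b)) {0<..<1}"
    by (simp add: has_integral_Icc_iff_Ioo mult.commute)
  have bound: "sqrt (f t) \<le> g t" if t: "t \<in> {0<..<1}" for t
  proof -
    have "sqrt (f t) \<le> sqrt (a + b / t)"
      using le[of t] t by simp
    also have "\<dots> \<le> g t"
      unfolding g_def using assms(4,5) t by (intro sqrt_add_divide_le) auto
    finally show ?thesis .
  qed
  have "(\<lambda>t. sqrt (f t)) integrable_on {0<..<1}"
  proof (rule measurable_bounded_by_integrable_imp_integrable)
    have "continuous_on {0<..<1} f" using cont by (rule continuous_on_subset) auto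
    then show "(\<lambda>t. sqrt (f t)) \<in> borel_measurable (lebesgue_on {0<..<1})"
      by (intro continuous_imp_measurable_on_sets_lebesgue continuous_intros) auto
    show "norm (sqrt (f t)) \<le> g t" if "t \<in> {0<..<1}" for t
      using bound[OF that] nonneg[of t] that by simp
  qed (use g in auto)
  then obtain i where i: "((\<lambda>t. sqrt (f t)) has_integral i) {0<..<1}" by blast
  then have "i \<le> sqrt a + 2 * sqrt b"
    using g bound by (rule has_integral_le)
  moreover have "((\<lambda>t. sqrt (f t)) has_integral i) {0..1}"
    using i by (simp add: has_integral_Icc_iff_Ioo)
  ultimately show ?thesis
    by (auto simp: integral_unique)
qed

definition normal_energy :: "real \<Rightarrow> (real \<Rightarrow> real \<Rightarrow> complex) \<Rightarrow> real \<Rightarrow> real" where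
  "normal_energy A c t = integral {0..2*pi} (\<lambda>\<theta>. (1 + A * (curvature c t \<theta>)\<^sup>2)
     * (Dt c t \<theta> \<bullet> unit_normal c t \<theta>)\<^sup>2 * norm (Dth c t \<theta>))"

lemma curvature_mult_norm_eq_Im:
  assumes "Dth c t \<theta> \<noteq> 0"
  shows "curvature c t \<theta> * norm (Dth c t \<theta>) = Im (Dth (Dth c) t \<theta> / Dth c t \<theta>)"
  using assms unfolding curvature_def Im_divide'
  by (simp add: field_simps power2_eq_square power3_eq_cube)

lemma norm_unit_normal:
  assumes "Dth c t \<theta> \<noteq> 0"
  shows "norm (unit_normal c t \<theta>) = 1"
  using assms by (simp add: unit_normal_def norm_divide norm_mult)

lemma smooth_strip_continuous_on:
  assumes "smooth_strip c" "g \<in> pderivs c"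
  shows "continuous_on ({0<..1} \<times> UNIV) (\<lambda>(t, \<theta>). g t \<theta>)"
  using assms unfolding smooth_strip_def tdom_def by blast

lemma smooth_strip_has_vector_derivative_Dth:
  assumes "smooth_strip c" "g \<in> pderivs c" "t \<in> {0<..1}"
  shows "(g t has_vector_derivative Dth g t \<theta>) (at \<theta>)"
  using assms unfolding smooth_strip_def tdom_def by blast

lemma continuous_on_curvature:
  assumes "smooth_strip c" "\<forall>t\<in>{0<..1}. \<forall>\<theta>. Dth c t \<theta> \<noteq> 0"
  shows "continuous_on ({0<..1} \<times> UNIV) (\<lambda>(t, \<theta>). curvature c t \<theta>)"
proof -
  have "continuous_on ({0<..1} \<times> UNIV) (\<lambda>(t, \<theta>). g t \<theta>)" if "g \<in> {Dth c, Dth (Dth c)}" for g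
    using that by (auto intro: smooth_strip_continuous_on[OF assms(1)] pderivs.intros)
  then show ?thesis
    unfolding curvature_def case_prod_beta using assms(2)
    by (intro continuous_intros) auto
qed

lemma continuous_on_unit_normal:
  assumes "smooth_strip c" "\<forall>t\<in>{0<..1}. \<forall>\<theta>. Dth c t \<theta> \<noteq> 0"
  shows "continuous_on ({0<..1} \<times> UNIV) (\<lambda>(t, \<theta>). unit_normal c t \<theta>)"
  using smooth_strip_continuous_on[OF assms(1) pderivs.dth[OF pderivs.base]] assms(2)
  unfolding unit_normal_def case_prod_beta by (intro continuous_intros) auto

lemma continuous_on_normal_energy:
  assumes "smooth_strip c" "\<forall>t\<in>{0<..1}. \<forall>\<theta>. Dth c t \<theta> \<noteq> 0"
  shows "continuous_on {0<..1} (normal_energy A c)"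
proof -
  have "continuous_on ({0<..1} \<times> UNIV) (\<lambda>(t, \<theta>). (1 + A * (curvature c t \<theta>)\<^sup>2)
     * (Dt c t \<theta> \<bullet> unit_normal c t \<theta>)\<^sup>2 * norm (Dth c t \<theta>))"
    using continuous_on_curvature[OF assms] continuous_on_unit_normal[OF assms]
      smooth_strip_continuous_on[OF assms(1) pderivs.dt[OF pderivs.base]]
      smooth_strip_continuous_on[OF assms(1) pderivs.dth[OF pderivs.base]]
    unfolding case_prod_beta by (intro continuous_intros) auto
  then have "continuous_on ({0<..1} \<times> cbox 0 (2*pi)) (\<lambda>(t, \<theta>). (1 + A * (curvature c t \<theta>)\<^sup>2)
     * (Dt c t \<theta> \<bullet> unit_normal c t \<theta>)\<^sup>2 * norm (Dth c t \<theta>))"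
    by (rule continuous_on_subset) auto
  then show ?thesis
    unfolding normal_energy_def using integral_continuous_on_param by fastforce
qed

lemma curve_length_nonneg: "0 \<le> curve_length c t"
  unfolding curve_length_def by (simp add: integral_nonneg_unconditional)

lemma deriv_lift_eq_curvature_mult_speed:
  assumes smooth: "smooth_strip c"
    and immersion: "\<forall>t\<in>{0<..1}. \<forall>\<theta>. Dth c t \<theta> \<noteq> 0"
    and lift_cont: "continuous_on ({0<..1} \<times> UNIV) (\<lambda>(t,\<theta>). \<alpha> t \<theta>)"
    and lift: "\<forall>t\<in>{0<..1}. \<forall>\<theta>. Dth c t \<theta> = complex_of_real (norm (Dth c t \<theta>)) * cis (\<alpha> t \<theta>)"
    and t: "t \<in> {0<..1}"
  shows "deriv (\<alpha> t) \<theta> = curvature c t \<theta> * norm (Dth c t \<theta>)"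
proof -
  have "isCont (\<alpha> t) \<theta>"
    using continuous_on_slice[OF lift_cont t, where U = UNIV] by (simp add: continuous_on_eq_continuous_at)
  then have "(\<alpha> t has_real_derivative Im (Dth (Dth c) t \<theta> / Dth c t \<theta>)) (at \<theta>)"
    using smooth_strip_has_vector_derivative_Dth[OF smooth pderivs.dth[OF pderivs.base] t]
      immersion lift t by (intro continuous_lift_has_real_derivative) auto
  then show ?thesis
    using curvature_mult_norm_eq_Im immersion t by (simp add: DERIV_imp_deriv)
qed

lemma normal_energy_nonneg:
  assumes "0 \<le> A"
  shows "0 \<le> normal_energy A c t"
  unfolding normal_energy_def using assms by (simp add: integral_nonneg_unconditional)

lemma normal_energy_le:
  assumes "0 \<le> A"
    and cont: "continuous_on {0..2*pi} (Dt c t)" "continuous_on {0..2*pi} (Dth c t)"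
      "continuous_on {0..2*pi} (curvature c t)"
    and nz: "\<forall>\<theta>. Dth c t \<theta> \<noteq> 0"
    and speed: "\<forall>\<theta>. norm (Dt c t \<theta>) \<le> V"
    and curv: "\<forall>\<theta>. \<bar>curvature c t \<theta>\<bar> \<le> K"
  shows "normal_energy A c t \<le> V\<^sup>2 * curve_length c t
    + A * K * V\<^sup>2 * integral {0..2*pi} (\<lambda>\<theta>. \<bar>curvature c t \<theta>\<bar> * norm (Dth c t \<theta>))"
proof -
  have normal_speed: "\<bar>Dt c t \<theta> \<bullet> unit_normal c t \<theta>\<bar> \<le> V" for \<theta>
    using Cauchy_Schwarz_ineq2[of "Dt c t \<theta>" "unit_normal c t \<theta>"] speed nz
    by (metis norm_unit_normal mult.right_neutral order_trans)
  have "continuous_on {0..2*pi} (unit_normal c t)"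
    unfolding unit_normal_def using cont nz by (intro continuous_intros) auto
  then have "(\<lambda>\<theta>. (1 + A * (curvature c t \<theta>)\<^sup>2) * (Dt c t \<theta> \<bullet> unit_normal c t \<theta>)\<^sup>2
      * norm (Dth c t \<theta>)) integrable_on {0..2*pi}"
    "(\<lambda>\<theta>. norm (Dth c t \<theta>)) integrable_on {0..2*pi}"
    "(\<lambda>\<theta>. \<bar>curvature c t \<theta>\<bar> * norm (Dth c t \<theta>)) integrable_on {0..2*pi}"
    using cont by (intro integrable_continuous_interval continuous_intros; simp)+
  then have "normal_energy A c t \<le> integral {0..2*pi} (\<lambda>\<theta>. V\<^sup>2 * norm (Dth c t \<theta>)
      + A * K * V\<^sup>2 * (\<bar>curvature c t \<theta>\<bar> * norm (Dth c t \<theta>)))"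
    unfolding normal_energy_def using normal_energy_density_le assms(1) curv normal_speed
    by (intro integral_le integrable_add integrable_on_mult_right) auto
  then show ?thesis
    using \<open>(\<lambda>\<theta>. norm (Dth c t \<theta>)) integrable_on _\<close> \<open>(\<lambda>\<theta>. \<bar>curvature c t \<theta>\<bar> * _) integrable_on _\<close>
    by (simp add: curve_length_def integral_add integrable_on_mult_right)
qed

lemma normal_energy_le_of_lift:
  assumes A: "0 \<le> A"
    and smooth: "smooth_strip c"
    and immersion: "\<forall>t\<in>{0<..1}. \<forall>\<theta>. Dth c t \<theta> \<noteq> 0"
    and lift_cont: "continuous_on ({0<..1} \<times> UNIV) (\<lambda>(t,\<theta>). \<alpha> t \<theta>)"
    and lift: "\<forall>t\<in>{0<..1}. \<forall>\<theta>. Dth c t \<theta> = complex_of_real (norm (Dth c t \<theta>)) * cis (\<alpha> t \<theta>)"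
    and t: "t \<in> {0<..1}"
    and length: "curve_length c t \<le> L"
    and speed: "\<forall>\<theta>. norm (Dt c t \<theta>) \<le> V"
    and turning: "integral {0..2*pi} (\<lambda>\<theta>. \<bar>deriv (\<alpha> t) \<theta>\<bar>) \<le> J"
    and curv: "\<forall>\<theta>. \<bar>curvature c t \<theta>\<bar> \<le> K"
  shows "normal_energy A c t \<le> V\<^sup>2 * L + A * K * V\<^sup>2 * J"
proof -
  have slice: "continuous_on {0..2*pi} (g t)"
    if "continuous_on ({0<..1} \<times> UNIV) (\<lambda>(t, \<theta>). g t \<theta>)" for g :: "real \<Rightarrow> real \<Rightarrow> 'a::topological_space"
    using continuous_on_slice[OF that t] by blast
  have "K \<ge> 0" using curv abs_ge_zero order_trans by blast
  have "normal_energy A c t \<le> V\<^sup>2 * curve_length c t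
      + A * K * V\<^sup>2 * integral {0..2*pi} (\<lambda>\<theta>. \<bar>curvature c t \<theta>\<bar> * norm (Dth c t \<theta>))"
    using normal_energy_le[OF A
        slice[OF smooth_strip_continuous_on[OF smooth pderivs.dt[OF pderivs.base]]]
        slice[OF smooth_strip_continuous_on[OF smooth pderivs.dth[OF pderivs.base]]]
        slice[OF continuous_on_curvature[OF smooth immersion]]]
      immersion speed curv t by blast
  also have "integral {0..2*pi} (\<lambda>\<theta>. \<bar>curvature c t \<theta>\<bar> * norm (Dth c t \<theta>))
      = integral {0..2*pi} (\<lambda>\<theta>. \<bar>deriv (\<alpha> t) \<theta>\<bar>)"
    using deriv_lift_eq_curvature_mult_speed[OF smooth immersion lift_cont lift t] by (simp add: abs_mult)
  also have "V\<^sup>2 * curve_length c t + A * K * V\<^sup>2 * \<dots> \<le> V\<^sup>2 * L + A * K * V\<^sup>2 * J"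
    using length turning A \<open>K \<ge> 0\<close> by (intro add_mono mult_left_mono) auto
  finally show ?thesis .
qed

theorem mainTheorem12:
  fixes A C1 C2 C3 C4 :: real
    and c :: "real \<Rightarrow> real \<Rightarrow> complex"
    and \<alpha> :: "real \<Rightarrow> real \<Rightarrow> real"
  assumes A: "A \<ge> 0"
    and smooth: "smooth_strip c"
    and periodic: "\<forall>t\<in>{0<..1}. \<forall>\<theta>. c t (\<theta> + 2*pi) = c t \<theta>"
    and immersion: "\<forall>t\<in>{0<..1}. \<forall>\<theta>. Dth c t \<theta> \<noteq> 0"
    and lift_cont: "continuous_on ({0<..1} \<times> UNIV) (\<lambda>(t,\<theta>). \<alpha> t \<theta>)"
    and lift: "\<forall>t\<in>{0<..1}. \<forall>\<theta>.
                 Dth c t \<theta> = complex_of_real (norm (Dth c t \<theta>)) * cis (\<alpha> t \<theta>)"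
    and h1: "\<forall>t\<in>{0<..1}. curve_length c t \<le> C1"
    and h2: "\<forall>t\<in>{0<..1}. \<forall>\<theta>. norm (Dt c t \<theta>) \<le> C2"
    and h3: "\<forall>t\<in>{0<..1}. integral {0..2*pi} (\<lambda>\<theta>. \<bar>deriv (\<lambda>\<phi>. \<alpha> t \<phi>) \<theta>\<bar>) \<le> C3"
    and h4: "\<forall>t\<in>{0<..1}. \<forall>\<theta>. \<bar>curvature c t \<theta>\<bar> \<le> C4 / t"
  shows "(\<lambda>t. sqrt (integral {0..2*pi} (\<lambda>\<theta>. (1 + A * (curvature c t \<theta>)\<^sup>2)
                    * (Dt c t \<theta> \<bullet> unit_normal c t \<theta>)\<^sup>2 * norm (Dth c t \<theta>))))
            integrable_on {0..1}
       \<and> integral {0..1} (\<lambda>t. sqrt (integral {0..2*pi} (\<lambda>\<theta>. (1 + A * (curvature c t \<theta>)\<^sup>2)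
                    * (Dt c t \<theta> \<bullet> unit_normal c t \<theta>)\<^sup>2 * norm (Dth c t \<theta>))))
         \<le> C2 * (sqrt C1 + 2 * sqrt (A * C3 * C4))"
proof -
  have one: "1 \<in> {0<..1::real}" by simp
  have C1: "0 \<le> C1"
    using h1[rule_format, OF one] curve_length_nonneg[of c 1] by linarith
  have C2: "0 \<le> C2"
    using h2[rule_format, OF one, of 0] norm_ge_zero[of "Dt c 1 0"] by linarith
  have C3: "0 \<le> C3"
    using h3[rule_format, OF one] integral_nonneg_unconditional[of "{0..2*pi}" "\<lambda>\<theta>. \<bar>deriv (\<alpha> 1) \<theta>\<bar>"]
    by simp
  have C4: "0 \<le> C4"
    using h4[rule_format, OF one, of 0] abs_ge_zero[of "curvature c 1 0"] by simp
  have energy_le: "normal_energy A c t \<le> C2\<^sup>2 * C1 + A * C3 * C4 * C2\<^sup>2 / t"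
    if t: "t \<in> {0<..1}" for t
    using normal_energy_le_of_lift[OF A smooth immersion lift_cont lift t, of C1 C2 C3 "C4 / t"] h1 h2 h3 h4 t
    by (simp add: mult_ac)
  have "(\<lambda>t. sqrt (normal_energy A c t)) integrable_on {0..1}
      \<and> integral {0..1} (\<lambda>t. sqrt (normal_energy A c t)) \<le> sqrt (C2\<^sup>2 * C1) + 2 * sqrt (A * C3 * C4 * C2\<^sup>2)"
    using continuous_on_normal_energy[OF smooth immersion] normal_energy_nonneg[OF A] energy_le A C1 C3 C4
    by (intro integral_sqrt_le_of_le_add_inverse) auto
  moreover have "sqrt (C2\<^sup>2 * C1) + 2 * sqrt (A * C3 * C4 * C2\<^sup>2) = C2 * (sqrt C1 + 2 * sqrt (A * C3 * C4))"
    using C2 by (simp add: real_sqrt_mult algebra_simps)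
  ultimately show ?thesis
    unfolding normal_energy_def by simp
qed

end
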